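(* Let $F:(M_1,g_1)\to(M_2,g_2)$ be a Riemannian submersion with $\dim M_1=n$, $\dim M_2=m$ and fibre dimension $r=\dim\mathcal V_p>2$. Let $p\in M_1$ and let $\Pi\subset\mathcal V_p$ be any $2$-plane. Choose an orthonormal basis $\{V_1,\dots,V_r\}$ of $\mathcal V_p$ with $\Pi=\mathrm{span}\{V_1,V_2\}$, and an orthonormal basis $\{h_1,\dots,h_s\}$ of $\mathcal H_p$. Then $$\tau^{\ker F_*}_{\mathcal V}(p)-K^{\ker F_*}_{\mathcal V}(\Pi)\;\ge\;\tau^{M_1}_{\mathcal V}(p)-K^{M_1}_{\mathcal V}(\Pi)-\frac{r^2(r-2)}{2(r-1)}\|H\|^2 .$$ Moreover, equality holds if and only if Condition (E) holds at $p$ for $\Pi$.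
   Context: Let $(M_1,g_1)$, $(M_2,g_2)$ be Riemannian manifolds, $\dim M_1=n$, $\dim M_2=m$, and $F:M_1\to M_2$ a Riemannian submersion (a surjective smooth map whose differential $F_{*p}$ is surjective at every $p$ and preserves the length of horizontal vectors). Write $\mathcal V=\ker F_*$ (vertical distribution), $\mathcal H=(\ker F_* )^\perp$ (horizontal distribution), $r=\dim\mathcal V_p=n-m$, $s=\dim\mathcal H_p=m$; $v,h$ denote the orthogonal projections onto $\mathcal V,\mathcal H$, and $\nabla$ the Levi-Civita connection of $g_1$. O'Neill's tensor: $\mathcal T_EF=h\nabla_{vE}vF+v\nabla_{vE}hF$. Curvature convention: $R^{M_1}(X,Y,Z,W)=g_1(R^{M_1}(X,Y)Z,W)$, normalized so that $R^{M_1}(X,Y,Y,X)$ is the sectional curvature of the plane spanned by orthonormal $X,Y$. The curvature $R^{\ker F_*}$ of the fibres is related to $R^{M_1}$ (as used in the paper) by: for vertical $F_1,\dots,F_4$, $R^{M_1}(F_1,F_2,F_3,F_4)=R^{\ker F_*}(F_1,F_2,F_3,F_4)+g_1(\mathcal T_{F_1}F_4,\mathcal T_{F_2}F_3)-g_1(\mathcal T_{F_2}F_4,\mathcal T_{F_1}F_3)$. With the chosen orthonormal bases at $p$: $(\mathcal T^{\mathcal H})^\ell_{ij}=g_1(\mathcal T_{V_i}V_j,h_\ell)$; the mean curvature vector of the fibres is $H=\frac1r\sum_{i=1}^r\mathcal T_{V_i}V_i$; $\tau^{\ker F_*}_{\mathcal V}(p)=\frac12\sum_{i,j=1}^rR^{\ker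 F_*}(V_i,V_j,V_j,V_i)$, $\tau^{M_1}_{\mathcal V}(p)=\frac12\sum_{i,j=1}^rR^{M_1}(V_i,V_j,V_j,V_i)$, $K^{\ker F_*}_{\mathcal V}(\Pi)=R^{\ker F_*}(V_1,V_2,V_2,V_1)$, $K^{M_1}_{\mathcal V}(\Pi)=R^{M_1}(V_1,V_2,V_2,V_1)$ for $\Pi=\mathrm{span}\{V_1,V_2\}$. Condition (E) at $p$ for $\Pi$: there exist orthonormal bases $\{V_1,\dots,V_r\}$ of $\mathcal V_p$ with $\Pi=\mathrm{span}\{V_1,V_2\}$ and $\{h_1,\dots,h_s\}$ of $\mathcal H_p$ with $h_1=H(p)/\|H(p)\|$ if $H(p)\neq0$ ($h_1$ arbitrary if $H(p)=0$), such that: $(\mathcal T^{\mathcal H})^\ell_{1j}=(\mathcal T^{\mathcal H})^\ell_{2j}=0$ for $j>2$, $\ell=1,\dots,s$; $(\mathcal T^{\mathcal H})^1_{ij}=0$ for $i\ne j$, $i,j>2$; $(\mathcal T^{\mathcal H})^\ell_{ij}=0$ for $i,j>2$, $\ell=2,\dots,s$; $(\mathcal T^{\mathcal H})^\ell_{11}+(\mathcal T^{\mathcal H})^\ell_{22}=0$ for $\ell=2,\dots,s$; and $(\mathcal T^{\mathcal H})^1_{11}+(\mathcal T^{\mathcal H})^1_{22}=(\mathcal T^{\mathcal H})^1_{33}=\cdots=(\mathcal T^{\mathcal H})^1_{rr}$. *)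

theory Defs
  imports "HOL-Analysis.Analysis"
begin

text \<open>Pointwise model at a fixed point p: the tangent space T_p M1 is a Euclidean
space 'a, the vertical space V_p = ker F_* is a subspace, the horizontal space is its
orthogonal complement. Orthonormal bases are indexed by 1..k.\<close>

definition orthonormal_basis_of :: "'a::euclidean_space set \<Rightarrow> nat \<Rightarrow> (nat \<Rightarrow> 'a) \<Rightarrow> bool" where
  "orthonormal_basis_of S k e \<longleftrightarrow>
     (\<forall>i\<in>{1..k}. e i \<in> S) \<and>
     (\<forall>i\<in>{1..k}. \<forall>j\<in>{1..k}. inner (e i) (e j) = (if i = j then 1 else 0)) \<and>
     span (e ` {1..k}) = S"

definition horizontal_space :: "'a::euclidean_space set \<Rightarrow> 'a set" where
  "horizontal_space Vp = {x. \<forall>v\<in>Vp. inner v x = 0}"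

definition algebraic_curvature_tensor :: "('a::euclidean_space \<Rightarrow> 'a \<Rightarrow> 'a \<Rightarrow> 'a \<Rightarrow> real) \<Rightarrow> bool" where
  "algebraic_curvature_tensor R \<longleftrightarrow>
     (\<forall>y z w. linear (\<lambda>x. R x y z w)) \<and> (\<forall>x z w. linear (\<lambda>y. R x y z w)) \<and>
     (\<forall>x y w. linear (\<lambda>z. R x y z w)) \<and> (\<forall>x y z. linear (\<lambda>w. R x y z w)) \<and>
     (\<forall>x y z w. R x y z w = - R y x z w) \<and>
     (\<forall>x y z w. R x y z w = - R x y w z) \<and>
     (\<forall>x y z w. R x y z w = R z w x y) \<and>
     (\<forall>x y z w. R x y z w + R y z x w + R z x y w = 0)"

definition tau_V :: "('a \<Rightarrow> 'a \<Rightarrow> 'a \<Rightarrow> 'a \<Rightarrow> real) \<Rightarrow> (nat \<Rightarrow> 'a) \<Rightarrow> nat \<Rightarrow> real" where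
  "tau_V R V r = (1/2) * (\<Sum>i\<in>{1..r}. \<Sum>j\<in>{1..r}. R (V i) (V j) (V j) (V i))"

definition K_V :: "('a \<Rightarrow> 'a \<Rightarrow> 'a \<Rightarrow> 'a \<Rightarrow> real) \<Rightarrow> (nat \<Rightarrow> 'a) \<Rightarrow> real" where
  "K_V R V = R (V 1) (V 2) (V 2) (V 1)"

definition mean_curv :: "('a::euclidean_space \<Rightarrow> 'a \<Rightarrow> 'a) \<Rightarrow> (nat \<Rightarrow> 'a) \<Rightarrow> nat \<Rightarrow> 'a" where
  "mean_curv T V r = (1 / real r) *\<^sub>R (\<Sum>i\<in>{1..r}. T (V i) (V i))"

definition Tcoef :: "('a::euclidean_space \<Rightarrow> 'a \<Rightarrow> 'a) \<Rightarrow> (nat \<Rightarrow> 'a) \<Rightarrow> (nat \<Rightarrow> 'a) \<Rightarrow> nat \<Rightarrow> nat \<Rightarrow> nat \<Rightarrow> real" where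
  "Tcoef T V h l i j = inner (T (V i) (V j)) (h l)"

definition condition_E :: "'a::euclidean_space set \<Rightarrow> nat \<Rightarrow> nat \<Rightarrow> ('a \<Rightarrow> 'a \<Rightarrow> 'a) \<Rightarrow> 'a set \<Rightarrow> bool" where
  "condition_E Vp r s T Pln \<longleftrightarrow>
    (\<exists>V h. orthonormal_basis_of Vp r V \<and> orthonormal_basis_of (horizontal_space Vp) s h \<and>
       span {V 1, V 2} = Pln \<and>
       (mean_curv T V r \<noteq> 0 \<longrightarrow> h 1 = (1 / norm (mean_curv T V r)) *\<^sub>R mean_curv T V r) \<and>
       (\<forall>l\<in>{1..s}. \<forall>j\<in>{3..r}. Tcoef T V h l 1 j = 0 \<and> Tcoef T V h l 2 j = 0) \<and>
       (\<forall>i\<in>{3..r}. \<forall>j\<in>{3..r}. i \<noteq> j \<longrightarrow> Tcoef T V h 1 i j = 0) \<and>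
       (\<forall>l\<in>{2..s}. \<forall>i\<in>{3..r}. \<forall>j\<in>{3..r}. Tcoef T V h l i j = 0) \<and>
       (\<forall>l\<in>{2..s}. Tcoef T V h l 1 1 + Tcoef T V h l 2 2 = 0) \<and>
       (\<forall>j\<in>{3..r}. Tcoef T V h 1 1 1 + Tcoef T V h 1 2 2 = Tcoef T V h 1 j j))"

end

theory Submission
  imports Defs
begin

(*
  Write A i j = T (V i) (V j): a family of horizontal vectors, symmetric in i and j. The Gauss
  equation turns the difference of the two sides of the inequality into the purely algebraic
  quantity chen_defect A r = 1/2 sum |A i j|^2 + <A 1 1, A 2 2> - |A 1 2|^2 - |sum A i i|^2 / (2(r-1)).
  Regrouping, twice this is the sum of |A i j|^2 over the off-diagonal entries other than A 1 2,
  plus sum |x m|^2 - |sum x m|^2 / (r-1) for the r-1 vectors x = (A 1 1 + A 2 2, A 3 3, ..., A r r),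
  a variance. So it is nonnegative, and it vanishes iff those entries vanish and A j j = A 1 1 + A 2 2
  for j >= 3. This shape does not depend on the orthonormal basis of the plane, since the trace of T
  over the plane does not, and it is condition (E) without coordinates: in the equality case H is a
  multiple of A 1 1 + A 2 2, so a horizontal basis starting with H/|H| (obtained by a Householder
  reflection) has the required vanishing coefficients.
  Only the Gauss equation enters.
*)

lemma orthonormal_basis_ofD:
  assumes "orthonormal_basis_of S k e"
  shows "\<And>i j. i \<in> {1..k} \<Longrightarrow> j \<in> {1..k} \<Longrightarrow> inner (e i) (e j) = (if i = j then 1 else 0)"
    and "\<And>i. i \<in> {1..k} \<Longrightarrow> e i \<in> S"
    and "span (e ` {1..k}) = S"
  using assms by (auto simp: orthonormal_basis_of_def)

lemma orthogonal_to_span_eq_0: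
  fixes x :: "'a::euclidean_space"
  assumes "x \<in> span (e ` I)" "\<And>i. i \<in> I \<Longrightarrow> inner x (e i) = 0"
  shows "x = 0"
proof -
  have "orthogonal x x"
    by (rule orthogonal_to_span[OF assms(1)]) (use assms(2) in \<open>auto simp: orthogonal_def\<close>)
  then show ?thesis by (simp add: orthogonal_def)
qed

lemma orthonormal_basis_of_inner_eq_0:
  assumes e: "orthonormal_basis_of S k e"
    and x: "x \<in> span (e ` J)" and J: "J \<subseteq> {1..k}" and j: "j \<in> {1..k} - J"
  shows "inner x (e j) = 0"
proof -
  have "orthogonal (e j) y" if "y \<in> e ` J" for y
    using that J j orthonormal_basis_ofD(1)[OF e] by (auto simp: orthogonal_def)
  then show ?thesis
    using orthogonal_to_span[OF x, of "e j"] by (simp add: orthogonal_def inner_commute)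
qed

lemma orthonormal_basis_of_expansion:
  assumes e: "orthonormal_basis_of S k e" and x: "x \<in> S"
  shows "x = (\<Sum>a\<in>{1..k}. inner x (e a) *\<^sub>R e a)"
proof -
  note on = orthonormal_basis_ofD[OF e]
  let ?y = "x - (\<Sum>a\<in>{1..k}. inner x (e a) *\<^sub>R e a)"
  have "inner (\<Sum>a\<in>{1..k}. inner x (e a) *\<^sub>R e a) (e i) = inner x (e i)" if "i \<in> {1..k}" for i
  proof -
    have "inner (\<Sum>a\<in>{1..k}. inner x (e a) *\<^sub>R e a) (e i) = (\<Sum>a\<in>{1..k}. if a = i then inner x (e a) else 0)"
      unfolding inner_sum_left using that by (intro sum.cong) (auto simp: on(1))
    then show ?thesis
      using that by simp
  qed
  moreover have "x \<in> span (e ` {1..k})"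
    using x on(3) by simp
  then have "?y \<in> span (e ` {1..k})"
    by (intro span_diff span_sum span_scale) (auto intro: span_base)
  ultimately show ?thesis
    using orthogonal_to_span_eq_0[of ?y e "{1..k}"] by (simp add: inner_diff_left)
qed

lemma orthonormal_basis_of_parseval:
  assumes e: "orthonormal_basis_of S k e" and x: "x \<in> S"
  shows "inner x y = (\<Sum>a\<in>{1..k}. inner x (e a) * inner y (e a))"
proof -
  have "inner x y = inner (\<Sum>a\<in>{1..k}. inner x (e a) *\<^sub>R e a) y"
    using orthonormal_basis_of_expansion[OF e x] by simp
  also have "\<dots> = (\<Sum>a\<in>{1..k}. inner x (e a) * inner y (e a))"
    unfolding inner_sum_left inner_scaleR_left by (simp add: inner_commute)
  finally show ?thesis .
qed

lemma bilinear_orthonormal_basis_expansion: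
  assumes T: "bilinear T" and e: "orthonormal_basis_of S k e" and x: "x \<in> S" and y: "y \<in> S"
  shows "T x y = (\<Sum>a\<in>{1..k}. \<Sum>b\<in>{1..k}. (inner x (e a) * inner y (e b)) *\<^sub>R T (e a) (e b))"
proof -
  have "T x y = T (\<Sum>a\<in>{1..k}. inner x (e a) *\<^sub>R e a) (\<Sum>b\<in>{1..k}. inner y (e b) *\<^sub>R e b)"
    using orthonormal_basis_of_expansion[OF e x] orthonormal_basis_of_expansion[OF e y] by simp
  also have "\<dots> = (\<Sum>(a, b)\<in>{1..k} \<times> {1..k}. (inner x (e a) * inner y (e b)) *\<^sub>R T (e a) (e b))"
    by (simp add: bilinear_sum[OF T] bilinear_lmul[OF T] bilinear_rmul[OF T] mult.commute)
  finally show ?thesis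
    by (simp add: sum.cartesian_product)
qed

lemma bilinear_trace_orthonormal_basis_eq:
  assumes T: "bilinear T" and e: "orthonormal_basis_of S k e" and f: "orthonormal_basis_of S l f"
  shows "(\<Sum>i\<in>{1..k}. T (e i) (e i)) = (\<Sum>a\<in>{1..l}. T (f a) (f a))"
proof -
  note one = orthonormal_basis_ofD[OF e] and onf = orthonormal_basis_ofD[OF f]
  have "(\<Sum>i\<in>{1..k}. T (e i) (e i))
      = (\<Sum>i\<in>{1..k}. \<Sum>a\<in>{1..l}. \<Sum>b\<in>{1..l}. (inner (e i) (f a) * inner (e i) (f b)) *\<^sub>R T (f a) (f b))"
    using one(2) by (intro sum.cong refl bilinear_orthonormal_basis_expansion[OF T f])
  also have "\<dots> = (\<Sum>a\<in>{1..l}. \<Sum>b\<in>{1..l}.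
      (\<Sum>i\<in>{1..k}. inner (f a) (e i) * inner (f b) (e i)) *\<^sub>R T (f a) (f b))"
    unfolding scaleR_sum_left
    by (subst sum.swap, rule sum.cong[OF refl], subst sum.swap) (simp add: inner_commute)
  also have "\<dots> = (\<Sum>a\<in>{1..l}. \<Sum>b\<in>{1..l}. inner (f a) (f b) *\<^sub>R T (f a) (f b))"
    using onf(2) by (intro sum.cong refl) (simp add: orthonormal_basis_of_parseval[OF e])
  also have "\<dots> = (\<Sum>a\<in>{1..l}. \<Sum>b\<in>{1..l}. if a = b then T (f a) (f b) else 0)"
    using onf(1) by (intro sum.cong refl) auto
  also have "\<dots> = (\<Sum>a\<in>{1..l}. T (f a) (f a))"
    by simp
  finally show ?thesis .
qed

lemma orthonormal_basis_of_initial: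
  assumes "orthonormal_basis_of S r e" "k \<le> r"
  shows "orthonormal_basis_of (span (e ` {1..k})) k e"
  using assms by (auto simp: orthonormal_basis_of_def intro: span_base)

lemma subspace_horizontal_space: "subspace (horizontal_space Vp)"
  unfolding subspace_def horizontal_space_def by (auto simp: inner_add_right)

lemma orthonormal_basis_of_with_first:
  fixes u :: "'a::euclidean_space"
  assumes h: "orthonormal_basis_of S k h" and S: "subspace S"
    and u: "u \<in> S" "norm u = 1" and k: "k \<ge> 1"
  obtains h' where "orthonormal_basis_of S k h'" "h' 1 = u"
proof -
  note onh = orthonormal_basis_ofD[OF h]
  have h1: "h 1 \<in> S" "inner (h 1) (h 1) = 1"
    using onh k by auto
  define w where "w = h 1 - u"
  \<comment> \<open>the Householder reflection exchanging \<open>h 1\<close> and \<open>u\<close>; the identity if \<open>w = 0\<close>, as \<open>x / 0 = 0\<close>\<close>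
  define \<sigma> where "\<sigma> x = x - (2 * inner x w / inner w w) *\<^sub>R w" for x
  have wS: "w \<in> S"
    unfolding w_def using h1 u S by (simp add: subspace_diff)
  have \<sigma>_linear: "linear \<sigma>"
    unfolding \<sigma>_def by (intro linearI) (auto simp: inner_add_left algebra_simps add_divide_distrib)
  have \<sigma>_involution: "\<sigma> (\<sigma> x) = x" for x
    by (cases "w = 0") (simp_all add: \<sigma>_def inner_diff_left algebra_simps field_simps)
  have \<sigma>_inner: "inner (\<sigma> x) (\<sigma> y) = inner x y" for x y
    by (cases "w = 0")
      (simp_all add: \<sigma>_def inner_diff_left inner_diff_right inner_commute algebra_simps field_simps power2_eq_square)
  have \<sigma>_S: "\<sigma> x \<in> S" if "x \<in> S" for x
    unfolding \<sigma>_def using that wS S by (simp add: subspace_diff subspace_scale)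
  have \<sigma>_image: "\<sigma> ` S = S"
    using \<sigma>_S \<sigma>_involution by (metis image_subset_iff subsetI subset_antisym image_eqI)
  have "\<sigma> (h 1) = u"
  proof (cases "w = 0")
    case True
    then show ?thesis by (simp add: \<sigma>_def w_def)
  next
    case False
    have "inner u u = 1" using u by (simp add: dot_square_norm)
    then have "2 * inner (h 1) w = inner w w"
      unfolding w_def using h1 by (simp add: inner_diff_left inner_diff_right inner_commute)
    then have "\<sigma> (h 1) = h 1 - w"
      using False by (simp add: \<sigma>_def)
    then show ?thesis by (simp add: w_def)
  qed
  moreover have "orthonormal_basis_of S k (\<sigma> \<circ> h)"
    unfolding orthonormal_basis_of_def
  proof (intro conjI ballI)
    show "(\<sigma> \<circ> h) i \<in> S" if "i \<in> {1..k}" for i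
      using that onh \<sigma>_S by simp
    show "inner ((\<sigma> \<circ> h) i) ((\<sigma> \<circ> h) j) = (if i = j then 1 else 0)" if "i \<in> {1..k}" "j \<in> {1..k}" for i j
      using that onh \<sigma>_inner by simp
    show "span ((\<sigma> \<circ> h) ` {1..k}) = S"
      unfolding image_comp[symmetric] span_linear_image[OF \<sigma>_linear] onh(3) \<sigma>_image ..
  qed
  ultimately show thesis
    using that by auto
qed

lemma orthonormal_basis_of_normalized_first:
  fixes v :: "'a::euclidean_space"
  assumes h: "orthonormal_basis_of S k h" and S: "subspace S" and v: "v \<in> S"
  obtains h' where "orthonormal_basis_of S k h'" "v \<noteq> 0 \<Longrightarrow> h' 1 = (1 / norm v) *\<^sub>R v"
proof (cases "v = 0")
  case True
  then show ?thesis
    using that h by blast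
next
  case False
  have "k \<ge> 1"
  proof (rule ccontr)
    assume "\<not> k \<ge> 1"
    then have "S = {0}"
      using orthonormal_basis_ofD(3)[OF h] by simp
    then show False
      using v False by simp
  qed
  then obtain g where "orthonormal_basis_of S k g" "g 1 = (1 / norm v) *\<^sub>R v"
    using orthonormal_basis_of_with_first[OF h S, of "(1 / norm v) *\<^sub>R v"] False v S
    by (auto intro: subspace_scale)
  then show ?thesis
    using that by blast
qed

lemma sum_atLeastAtMost_split_1_2:
  assumes "r \<ge> (2::nat)"
  shows "(\<Sum>j\<in>{1..r}. f j) = f 1 + f 2 + (\<Sum>j\<in>{3..r}. f j)"
proof -
  have "{1..r} = insert 1 (insert 2 {3..r})"
    using assms by auto
  then show ?thesis
    by (simp add: add.assoc)
qed

lemma norm_sum_power2_sub_mean: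
  fixes x :: "nat \<Rightarrow> 'a::real_inner"
  assumes "finite I" "I \<noteq> {}"
  defines "\<mu> \<equiv> (1 / real (card I)) *\<^sub>R (\<Sum>m\<in>I. x m)"
  shows "(\<Sum>m\<in>I. (norm (x m))\<^sup>2) - (norm (\<Sum>m\<in>I. x m))\<^sup>2 / real (card I) = (\<Sum>m\<in>I. (norm (x m - \<mu>))\<^sup>2)"
proof -
  let ?S = "\<Sum>m\<in>I. x m" and ?n = "real (card I)"
  have n: "?n > 0"
    using assms by (simp add: card_gt_0_iff)
  have "(\<Sum>m\<in>I. (norm (x m - \<mu>))\<^sup>2) = (\<Sum>m\<in>I. (norm (x m))\<^sup>2 - 2 * inner (x m) \<mu> + (norm \<mu>)\<^sup>2)"
    by (simp add: power2_norm_eq_inner inner_diff_left inner_diff_right inner_commute algebra_simps)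
  also have "\<dots> = (\<Sum>m\<in>I. (norm (x m))\<^sup>2) - 2 * inner ?S \<mu> + ?n * (norm \<mu>)\<^sup>2"
    by (simp add: sum.distrib sum_subtractf inner_sum_left sum_distrib_left)
  also have "inner ?S \<mu> = (norm ?S)\<^sup>2 / ?n"
    by (simp add: \<mu>_def power2_norm_eq_inner)
  also have "?n * (norm \<mu>)\<^sup>2 = (norm ?S)\<^sup>2 / ?n"
    using n by (simp add: \<mu>_def power2_eq_square field_simps)
  finally show ?thesis by simp
qed

lemma norm_sum_power2_div_card_le:
  fixes x :: "nat \<Rightarrow> 'a::real_inner"
  assumes "finite I" "I \<noteq> {}"
  shows "(norm (\<Sum>m\<in>I. x m))\<^sup>2 / real (card I) \<le> (\<Sum>m\<in>I. (norm (x m))\<^sup>2)"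
    and "(norm (\<Sum>m\<in>I. x m))\<^sup>2 / real (card I) = (\<Sum>m\<in>I. (norm (x m))\<^sup>2)
           \<longleftrightarrow> (\<forall>m\<in>I. \<forall>n\<in>I. x m = x n)"
proof -
  define \<mu> where "\<mu> = (1 / real (card I)) *\<^sub>R (\<Sum>m\<in>I. x m)"
  note decomp = norm_sum_power2_sub_mean[OF assms, of x, folded \<mu>_def]
  have "(\<Sum>m\<in>I. (norm (x m - \<mu>))\<^sup>2) \<ge> 0"
    by (simp add: sum_nonneg)
  then show "(norm (\<Sum>m\<in>I. x m))\<^sup>2 / real (card I) \<le> (\<Sum>m\<in>I. (norm (x m))\<^sup>2)"
    using decomp by linarith
  have "(norm (\<Sum>m\<in>I. x m))\<^sup>2 / real (card I) = (\<Sum>m\<in>I. (norm (x m))\<^sup>2)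
      \<longleftrightarrow> (\<Sum>m\<in>I. (norm (x m - \<mu>))\<^sup>2) = 0"
    by (auto simp: decomp[symmetric])
  also have "\<dots> \<longleftrightarrow> (\<forall>m\<in>I. x m = \<mu>)"
    using assms(1) by (simp add: sum_nonneg_eq_0_iff)
  also have "\<dots> \<longleftrightarrow> (\<forall>m\<in>I. \<forall>n\<in>I. x m = x n)"
  proof
    assume const: "\<forall>m\<in>I. \<forall>n\<in>I. x m = x n"
    obtain m0 where m0: "m0 \<in> I"
      using assms(2) by auto
    have xm: "x m = x m0" if "m \<in> I" for m
      using const m0 that by blast
    then have "(\<Sum>m\<in>I. x m) = real (card I) *\<^sub>R x m0"
      by (simp add: sum_constant_scaleR[symmetric] cong: sum.cong)
    then have "\<mu> = x m0"
      using assms by (simp add: \<mu>_def)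
    then show "\<forall>m\<in>I. x m = \<mu>"
      using xm by blast
  qed auto
  finally show "(norm (\<Sum>m\<in>I. x m))\<^sup>2 / real (card I) = (\<Sum>m\<in>I. (norm (x m))\<^sup>2)
           \<longleftrightarrow> (\<forall>m\<in>I. \<forall>n\<in>I. x m = x n)" .
qed

definition chen_defect :: "(nat \<Rightarrow> nat \<Rightarrow> 'a::real_inner) \<Rightarrow> nat \<Rightarrow> real" where
  "chen_defect A r =
     (1/2) * (\<Sum>i\<in>{1..r}. \<Sum>j\<in>{1..r}. (norm (A i j))\<^sup>2) + inner (A 1 1) (A 2 2) - (norm (A 1 2))\<^sup>2
     - (norm (\<Sum>i\<in>{1..r}. A i i))\<^sup>2 / (2 * (real r - 1))"

lemma chen_defect_decomposition:
  fixes A :: "nat \<Rightarrow> nat \<Rightarrow> 'a::real_inner"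
  assumes r: "r \<ge> 2" and sym: "\<And>i j. i \<in> {1..r} \<Longrightarrow> j \<in> {1..r} \<Longrightarrow> A i j = A j i"
  defines "x \<equiv> \<lambda>m. if m = 2 then A 1 1 + A 2 2 else A m m"
  shows "2 * chen_defect A r =
           2 * (\<Sum>j\<in>{3..r}. (norm (A 1 j))\<^sup>2 + (norm (A 2 j))\<^sup>2)
         + (\<Sum>i\<in>{3..r}. \<Sum>j\<in>{3..r} - {i}. (norm (A i j))\<^sup>2)
         + ((\<Sum>m\<in>{2..r}. (norm (x m))\<^sup>2) - (norm (\<Sum>m\<in>{2..r}. x m))\<^sup>2 / real (card {2..r}))"
proof -
  let ?K = "{3..r}"
  note split = sum_atLeastAtMost_split_1_2[OF r]
  have U2: "{2..r} = insert 2 ?K"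
    using r by auto
  have col: "(\<Sum>i\<in>?K. (norm (A i a))\<^sup>2) = (\<Sum>j\<in>?K. (norm (A a j))\<^sup>2)" if "a \<in> {1..r}" for a
    using sym that by (intro sum.cong) auto
  have diag: "(\<Sum>j\<in>?K. (norm (A i j))\<^sup>2) = (norm (A i i))\<^sup>2 + (\<Sum>j\<in>?K - {i}. (norm (A i j))\<^sup>2)"
    if "i \<in> ?K" for i
    using that by (simp add: sum.remove)
  have x_K: "x m = A m m" if "m \<in> ?K" for m
    using that by (simp add: x_def)
  have "(\<Sum>i\<in>{1..r}. \<Sum>j\<in>{1..r}. (norm (A i j))\<^sup>2)
      = ((norm (A 1 1))\<^sup>2 + (norm (A 1 2))\<^sup>2 + (\<Sum>j\<in>?K. (norm (A 1 j))\<^sup>2))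
      + ((norm (A 2 1))\<^sup>2 + (norm (A 2 2))\<^sup>2 + (\<Sum>j\<in>?K. (norm (A 2 j))\<^sup>2))
      + (\<Sum>i\<in>?K. (norm (A i 1))\<^sup>2 + (norm (A i 2))\<^sup>2 + (\<Sum>j\<in>?K. (norm (A i j))\<^sup>2))"
    by (simp only: split)
  also have "(\<Sum>i\<in>?K. (norm (A i 1))\<^sup>2 + (norm (A i 2))\<^sup>2 + (\<Sum>j\<in>?K. (norm (A i j))\<^sup>2))
      = (\<Sum>j\<in>?K. (norm (A 1 j))\<^sup>2) + (\<Sum>j\<in>?K. (norm (A 2 j))\<^sup>2)
      + (\<Sum>i\<in>?K. (norm (A i i))\<^sup>2) + (\<Sum>i\<in>?K. \<Sum>j\<in>?K - {i}. (norm (A i j))\<^sup>2)"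
    using col[of 1] col[of 2] r by (simp add: sum.distrib diag)
  also have "A 2 1 = A 1 2"
    using sym r by simp
  finally have Q: "(\<Sum>i\<in>{1..r}. \<Sum>j\<in>{1..r}. (norm (A i j))\<^sup>2)
      = (norm (A 1 1))\<^sup>2 + (norm (A 2 2))\<^sup>2 + 2 * (norm (A 1 2))\<^sup>2
      + 2 * (\<Sum>j\<in>?K. (norm (A 1 j))\<^sup>2 + (norm (A 2 j))\<^sup>2)
      + (\<Sum>i\<in>?K. (norm (A i i))\<^sup>2) + (\<Sum>i\<in>?K. \<Sum>j\<in>?K - {i}. (norm (A i j))\<^sup>2)"
    by (simp add: sum.distrib algebra_simps)
  have "(\<Sum>i\<in>{1..r}. A i i) = A 1 1 + A 2 2 + (\<Sum>i\<in>?K. A i i)"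
    by (simp only: split)
  also have "\<dots> = (\<Sum>m\<in>{2..r}. x m)"
    using x_K by (simp add: U2 x_def)
  finally have S: "(\<Sum>i\<in>{1..r}. A i i) = (\<Sum>m\<in>{2..r}. x m)" .
  have "(\<Sum>m\<in>{2..r}. (norm (x m))\<^sup>2) = (norm (A 1 1 + A 2 2))\<^sup>2 + (\<Sum>i\<in>?K. (norm (A i i))\<^sup>2)"
    using x_K by (simp add: U2 x_def)
  also have "(norm (A 1 1 + A 2 2))\<^sup>2 = (norm (A 1 1))\<^sup>2 + (norm (A 2 2))\<^sup>2 + 2 * inner (A 1 1) (A 2 2)"
    by (simp add: power2_norm_eq_inner inner_add_left inner_add_right inner_commute)
  finally have X: "(\<Sum>m\<in>{2..r}. (norm (x m))\<^sup>2)
      = (norm (A 1 1))\<^sup>2 + (norm (A 2 2))\<^sup>2 + 2 * inner (A 1 1) (A 2 2) + (\<Sum>i\<in>?K. (norm (A i i))\<^sup>2)" .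
  have card: "real (card {2..r}) = real r - 1"
    using r by simp
  show ?thesis
    using r unfolding chen_defect_def Q S X card by (simp add: field_simps)
qed

definition chen_equality_shape :: "(nat \<Rightarrow> nat \<Rightarrow> 'a::comm_monoid_add) \<Rightarrow> nat \<Rightarrow> bool" where
  "chen_equality_shape A r \<longleftrightarrow>
     (\<forall>j\<in>{3..r}. A 1 j = 0 \<and> A 2 j = 0) \<and>
     (\<forall>i\<in>{3..r}. \<forall>j\<in>{3..r}. i \<noteq> j \<longrightarrow> A i j = 0) \<and>
     (\<forall>j\<in>{3..r}. A j j = A 1 1 + A 2 2)"

lemma chen_defect_nonneg_eq_0_iff:
  fixes A :: "nat \<Rightarrow> nat \<Rightarrow> 'a::real_inner"
  assumes r: "r \<ge> 2" and sym: "\<And>i j. i \<in> {1..r} \<Longrightarrow> j \<in> {1..r} \<Longrightarrow> A i j = A j i"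
  shows "chen_defect A r \<ge> 0"
    and "chen_defect A r = 0 \<longleftrightarrow> chen_equality_shape A r"
proof -
  define x where "x m = (if m = 2 then A 1 1 + A 2 2 else A m m)" for m
  define D12 where "D12 = (\<Sum>j\<in>{3..r}. (norm (A 1 j))\<^sup>2 + (norm (A 2 j))\<^sup>2)"
  define Doff where "Doff = (\<Sum>i\<in>{3..r}. \<Sum>j\<in>{3..r} - {i}. (norm (A i j))\<^sup>2)"
  define Var where "Var = (\<Sum>m\<in>{2..r}. (norm (x m))\<^sup>2) - (norm (\<Sum>m\<in>{2..r}. x m))\<^sup>2 / real (card {2..r})"
  have decomp: "2 * chen_defect A r = 2 * D12 + Doff + Var"
    unfolding D12_def Doff_def Var_def x_def by (rule chen_defect_decomposition[OF r sym])
  have I: "finite {2..r}" "{2..r} \<noteq> {}"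
    using r by auto
  have D12: "D12 \<ge> 0" "D12 = 0 \<longleftrightarrow> (\<forall>j\<in>{3..r}. A 1 j = 0 \<and> A 2 j = 0)"
    unfolding D12_def by (simp_all add: sum_nonneg sum_nonneg_eq_0_iff add_nonneg_eq_0_iff)
  have "Doff = 0 \<longleftrightarrow> (\<forall>i\<in>{3..r}. \<forall>j\<in>{3..r} - {i}. A i j = 0)"
    unfolding Doff_def by (simp add: sum_nonneg sum_nonneg_eq_0_iff)
  also have "\<dots> \<longleftrightarrow> (\<forall>i\<in>{3..r}. \<forall>j\<in>{3..r}. i \<noteq> j \<longrightarrow> A i j = 0)"
    by auto
  finally have Doff: "Doff \<ge> 0" "Doff = 0 \<longleftrightarrow> (\<forall>i\<in>{3..r}. \<forall>j\<in>{3..r}. i \<noteq> j \<longrightarrow> A i j = 0)"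
    unfolding Doff_def by (simp_all add: sum_nonneg)
  note mean = norm_sum_power2_div_card_le[OF I, of x]
  have "Var = 0 \<longleftrightarrow> (norm (\<Sum>m\<in>{2..r}. x m))\<^sup>2 / real (card {2..r}) = (\<Sum>m\<in>{2..r}. (norm (x m))\<^sup>2)"
    unfolding Var_def by auto
  then have Var: "Var \<ge> 0" "Var = 0 \<longleftrightarrow> (\<forall>m\<in>{2..r}. \<forall>n\<in>{2..r}. x m = x n)"
    using mean unfolding Var_def by simp_all
  have "(\<forall>m\<in>{2..r}. \<forall>n\<in>{2..r}. x m = x n) \<longleftrightarrow> (\<forall>j\<in>{3..r}. A j j = A 1 1 + A 2 2)"
  proof
    assume const: "\<forall>m\<in>{2..r}. \<forall>n\<in>{2..r}. x m = x n"
    show "\<forall>j\<in>{3..r}. A j j = A 1 1 + A 2 2"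
    proof
      fix j
      assume j: "j \<in> {3..r}"
      then have "j \<in> {2..r}" "2 \<in> {2..r}"
        using r by auto
      then have "x j = x 2"
        using const by blast
      then show "A j j = A 1 1 + A 2 2"
        using j by (simp add: x_def)
    qed
  next
    assume "\<forall>j\<in>{3..r}. A j j = A 1 1 + A 2 2"
    then have "\<forall>m\<in>{2..r}. x m = A 1 1 + A 2 2"
      by (auto simp: x_def)
    then show "\<forall>m\<in>{2..r}. \<forall>n\<in>{2..r}. x m = x n"
      by simp
  qed
  then show "chen_defect A r \<ge> 0" "chen_defect A r = 0 \<longleftrightarrow> chen_equality_shape A r"
    using decomp D12 Doff Var unfolding chen_equality_shape_def by auto
qed

lemma chen_equality_shape_expansion:
  fixes W :: "nat \<Rightarrow> 'a::euclidean_space"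
  assumes T: "bilinear T" and r: "r \<ge> 2" and W: "orthonormal_basis_of Vp r W"
    and T_sym: "\<And>U Z. U \<in> Vp \<Longrightarrow> Z \<in> Vp \<Longrightarrow> T U Z = T Z U"
    and shape: "chen_equality_shape (\<lambda>i j. T (W i) (W j)) r"
    and x: "x \<in> Vp" "inner x (W 1) = 0" "inner x (W 2) = 0" and y: "y \<in> Vp"
  shows "T x y = (\<Sum>k\<in>{3..r}. inner x (W k) * inner y (W k)) *\<^sub>R (T (W 1) (W 1) + T (W 2) (W 2))"
proof -
  note onW = orthonormal_basis_ofD[OF W]
  let ?K = "{3..r}" and ?B = "T (W 1) (W 1) + T (W 2) (W 2)"
  define c where "c a b = inner x (W a) * inner y (W b)" for a b
  have row: "(\<Sum>b\<in>{1..r}. c a b *\<^sub>R T (W a) (W b)) = c a a *\<^sub>R ?B" if a: "a \<in> ?K" for a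
  proof -
    have "T (W a) (W b) = 0" if "b \<in> {1, 2}" for b
      using that a r shape T_sym[OF onW(2) onW(2), of a b] unfolding chen_equality_shape_def by auto
    moreover have "(\<Sum>b\<in>?K. c a b *\<^sub>R T (W a) (W b)) = (\<Sum>b\<in>?K. if b = a then c a a *\<^sub>R ?B else 0)"
      using a shape unfolding chen_equality_shape_def by (intro sum.cong) auto
    ultimately show ?thesis
      unfolding sum_atLeastAtMost_split_1_2[OF r] using a by simp
  qed
  have "T x y = (\<Sum>a\<in>{1..r}. \<Sum>b\<in>{1..r}. c a b *\<^sub>R T (W a) (W b))"
    unfolding c_def by (rule bilinear_orthonormal_basis_expansion[OF T W x(1) y])
  also have "\<dots> = (\<Sum>a\<in>?K. \<Sum>b\<in>{1..r}. c a b *\<^sub>R T (W a) (W b))"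
    unfolding sum_atLeastAtMost_split_1_2[OF r, of "\<lambda>a. \<Sum>b\<in>{1..r}. c a b *\<^sub>R T (W a) (W b)"]
    using x by (simp add: c_def)
  also have "\<dots> = (\<Sum>a\<in>?K. c a a *\<^sub>R ?B)"
    by (rule sum.cong[OF refl row])
  finally show ?thesis
    by (simp add: c_def scaleR_sum_left)
qed

lemma chen_equality_shape_basis_change:
  fixes V W :: "nat \<Rightarrow> 'a::euclidean_space"
  assumes T: "bilinear T" and r: "r \<ge> 2"
    and W: "orthonormal_basis_of Vp r W" and V: "orthonormal_basis_of Vp r V"
    and plane: "span {V 1, V 2} = span {W 1, W 2}"
    and T_sym: "\<And>U Z. U \<in> Vp \<Longrightarrow> Z \<in> Vp \<Longrightarrow> T U Z = T Z U"
    and shape: "chen_equality_shape (\<lambda>i j. T (W i) (W j)) r"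
  shows "chen_equality_shape (\<lambda>i j. T (V i) (V j)) r"
proof -
  note onW = orthonormal_basis_ofD[OF W] and onV = orthonormal_basis_ofD[OF V]
  let ?K = "{3..r}"
  have pair: "e ` {1..2} = {e 1, e 2}" for e :: "nat \<Rightarrow> 'a"
    by (auto simp: atLeastAtMost_def atLeast_def atMost_def le_Suc_eq numeral_2_eq_2)
  have planes: "span (V ` {1..2}) = span (W ` {1..2})"
    unfolding pair by (rule plane)
  have Vj_perp_W12: "inner (V j) (W a) = 0" and V12_perp_Wj: "inner (V a) (W j) = 0"
    if "j \<in> ?K" "a \<in> {1, 2}" for j a
  proof -
    have J: "{1..2} \<subseteq> {1..r}" "j \<in> {1..r} - {1..2}"
      using that by auto
    have "W a \<in> span (V ` {1..2})"
      unfolding planes using that by (auto intro: span_base)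
    then have "inner (W a) (V j) = 0"
      by (rule orthonormal_basis_of_inner_eq_0[OF V _ J])
    moreover have "V a \<in> span (W ` {1..2})"
      unfolding planes[symmetric] using that by (auto intro: span_base)
    then have "inner (V a) (W j) = 0"
      by (rule orthonormal_basis_of_inner_eq_0[OF W _ J])
    ultimately show "inner (V j) (W a) = 0" "inner (V a) (W j) = 0"
      by (simp_all add: inner_commute)
  qed
  have TV: "T (V i) (V j) = (if i = j then 1 else 0) *\<^sub>R (T (W 1) (W 1) + T (W 2) (W 2))"
    if i: "i \<in> ?K" and j: "j \<in> {1..r}" for i j
  proof -
    have "(\<Sum>k\<in>?K. inner (V i) (W k) * inner (V j) (W k)) = (\<Sum>k\<in>{1..r}. inner (V i) (W k) * inner (V j) (W k))"
      unfolding sum_atLeastAtMost_split_1_2[OF r] using Vj_perp_W12[OF i] by simp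
    also have "\<dots> = inner (V i) (V j)"
      using i onV(2) by (intro orthonormal_basis_of_parseval[OF W, symmetric]) auto
    also have "\<dots> = (if i = j then 1 else 0)"
      using i j onV(1) by auto
    finally show ?thesis
      using i j Vj_perp_W12[OF i] onV(2)
      by (subst chen_equality_shape_expansion[OF T r W T_sym shape]) auto
  qed
  have "orthonormal_basis_of (span (W ` {1..2})) 2 V"
    using orthonormal_basis_of_initial[OF V, of 2] r by (simp only: planes)
  then have "(\<Sum>i\<in>{1..2}. T (V i) (V i)) = (\<Sum>i\<in>{1..2}. T (W i) (W i))"
    using r by (intro bilinear_trace_orthonormal_basis_eq[OF T _ orthonormal_basis_of_initial[OF W]])
  then have "T (V 1) (V 1) + T (V 2) (V 2) = T (W 1) (W 1) + T (W 2) (W 2)"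
    by (simp add: numeral_2_eq_2)
  moreover have "T (V a) (V j) = 0" if "a \<in> {1, 2}" "j \<in> ?K" for a j
    using that TV[of j a] T_sym[OF onV(2) onV(2), of a j] by auto
  ultimately show ?thesis
    unfolding chen_equality_shape_def using TV by auto
qed

lemma condition_E_imp_chen_equality_shape:
  fixes V :: "nat \<Rightarrow> 'a::euclidean_space"
  assumes T: "bilinear T" and r: "r \<ge> 2"
    and T_hor: "\<And>U W. U \<in> Vp \<Longrightarrow> W \<in> Vp \<Longrightarrow> T U W \<in> horizontal_space Vp"
    and T_sym: "\<And>U W. U \<in> Vp \<Longrightarrow> W \<in> Vp \<Longrightarrow> T U W = T W U"
    and V: "orthonormal_basis_of Vp r V" and plane: "span {V 1, V 2} = Pln"
    and E: "condition_E Vp r s T Pln"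
  shows "chen_equality_shape (\<lambda>i j. T (V i) (V j)) r"
proof -
  obtain W h where W: "orthonormal_basis_of Vp r W" and h: "orthonormal_basis_of (horizontal_space Vp) s h"
    and plane_W: "span {W 1, W 2} = Pln"
    and e1: "\<forall>l\<in>{1..s}. \<forall>j\<in>{3..r}. Tcoef T W h l 1 j = 0 \<and> Tcoef T W h l 2 j = 0"
    and e2: "\<forall>i\<in>{3..r}. \<forall>j\<in>{3..r}. i \<noteq> j \<longrightarrow> Tcoef T W h 1 i j = 0"
    and e3: "\<forall>l\<in>{2..s}. \<forall>i\<in>{3..r}. \<forall>j\<in>{3..r}. Tcoef T W h l i j = 0"
    and e4: "\<forall>l\<in>{2..s}. Tcoef T W h l 1 1 + Tcoef T W h l 2 2 = 0"
    and e5: "\<forall>j\<in>{3..r}. Tcoef T W h 1 1 1 + Tcoef T W h 1 2 2 = Tcoef T W h 1 j j"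
    using E unfolding condition_E_def by blast
  note onW = orthonormal_basis_ofD[OF W] and onh = orthonormal_basis_ofD[OF h]
  have horizontal_eq_0: "x = 0"
    if "x \<in> horizontal_space Vp" "\<And>l. l \<in> {1..s} \<Longrightarrow> inner x (h l) = 0" for x
    using that onh(3) orthogonal_to_span_eq_0[of x h "{1..s}"] by auto
  have TW: "T (W i) (W j) \<in> horizontal_space Vp" if "i \<in> {1..r}" "j \<in> {1..r}" for i j
    using T_hor onW(2) that by auto
  have l_cases: "l = 1 \<or> l \<in> {2..s}" if "l \<in> {1..s}" for l
    using that by auto
  have "chen_equality_shape (\<lambda>i j. T (W i) (W j)) r"
    unfolding chen_equality_shape_def
  proof (intro conjI ballI impI)
    fix j
    assume j: "j \<in> {3..r}"
    then show "T (W 1) (W j) = 0" "T (W 2) (W j) = 0"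
      using horizontal_eq_0 TW[of 1 j] TW[of 2 j] e1 r by (auto simp: Tcoef_def)
    let ?x = "T (W j) (W j) - (T (W 1) (W 1) + T (W 2) (W 2))"
    have "?x \<in> horizontal_space Vp"
      using j r TW[of j j] TW[of 1 1] TW[of 2 2]
      by (intro subspace_diff[OF subspace_horizontal_space] subspace_add[OF subspace_horizontal_space]) auto
    moreover have "inner ?x (h l) = 0" if "l \<in> {1..s}" for l
      using l_cases[OF that] j e3 e4 e5 by (auto simp: Tcoef_def inner_diff_left inner_add_left)
    ultimately have "?x = 0"
      by (rule horizontal_eq_0)
    then show "T (W j) (W j) = T (W 1) (W 1) + T (W 2) (W 2)"
      by simp
  next
    fix i j
    assume ij: "i \<in> {3..r}" "j \<in> {3..r}" "i \<noteq> j"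
    have "inner (T (W i) (W j)) (h l) = 0" if "l \<in> {1..s}" for l
      using l_cases[OF that] e2 e3 ij by (auto simp: Tcoef_def)
    then show "T (W i) (W j) = 0"
      using horizontal_eq_0 TW ij by auto
  qed
  then show ?thesis
    using chen_equality_shape_basis_change[OF T r W V _ T_sym] plane plane_W by simp
qed

lemma mean_curv_chen_equality_shape:
  assumes r: "r \<ge> 2" and shape: "chen_equality_shape (\<lambda>i j. T (V i) (V j)) r"
  shows "mean_curv T V r = ((real r - 1) / real r) *\<^sub>R (T (V 1) (V 1) + T (V 2) (V 2))"
proof -
  let ?B = "T (V 1) (V 1) + T (V 2) (V 2)"
  have "(\<Sum>i\<in>{1..r}. T (V i) (V i)) = ?B + (\<Sum>i\<in>{3..r}. ?B)"
    unfolding sum_atLeastAtMost_split_1_2[OF r] using shape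
    by (simp add: chen_equality_shape_def add.assoc)
  also have "\<dots> = (real r - 1) *\<^sub>R ?B"
    using r by (simp add: sum_constant_scaleR of_nat_diff algebra_simps scaleR_2)
  finally show ?thesis
    by (simp add: mean_curv_def)
qed

lemma mean_curv_in_horizontal_space:
  assumes "\<And>i. i \<in> {1..r} \<Longrightarrow> V i \<in> Vp"
    and "\<And>U W. U \<in> Vp \<Longrightarrow> W \<in> Vp \<Longrightarrow> T U W \<in> horizontal_space Vp"
  shows "mean_curv T V r \<in> horizontal_space Vp"
  unfolding mean_curv_def using assms
  by (intro subspace_scale[OF subspace_horizontal_space] subspace_sum[OF subspace_horizontal_space]) auto

lemma chen_equality_shape_imp_condition_E:
  fixes V :: "nat \<Rightarrow> 'a::euclidean_space"
  assumes r: "r \<ge> 2"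
    and T_hor: "\<And>U W. U \<in> Vp \<Longrightarrow> W \<in> Vp \<Longrightarrow> T U W \<in> horizontal_space Vp"
    and V: "orthonormal_basis_of Vp r V" and plane: "span {V 1, V 2} = Pln"
    and h: "orthonormal_basis_of (horizontal_space Vp) s h"
    and shape: "chen_equality_shape (\<lambda>i j. T (V i) (V j)) r"
  shows "condition_E Vp r s T Pln"
proof -
  define H where "H = mean_curv T V r"
  define B where "B = T (V 1) (V 1) + T (V 2) (V 2)"
  have B_H: "B = (real r / (real r - 1)) *\<^sub>R H"
    using r mean_curv_chen_equality_shape[OF r shape] by (simp add: H_def B_def)
  have H_hor: "H \<in> horizontal_space Vp"
    unfolding H_def using orthonormal_basis_ofD(2)[OF V] T_hor by (rule mean_curv_in_horizontal_space)
  obtain h' where h': "orthonormal_basis_of (horizontal_space Vp) s h'"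
    and h'1: "H \<noteq> 0 \<Longrightarrow> h' 1 = (1 / norm H) *\<^sub>R H"
    using orthonormal_basis_of_normalized_first[OF h subspace_horizontal_space H_hor] by blast
  have B_perp: "inner B (h' l) = 0" if "l \<in> {2..s}" for l
  proof (cases "H = 0")
    case False
    have "inner (h' 1) (h' l) = 0"
      using orthonormal_basis_ofD(1)[OF h', of 1 l] that by auto
    then show ?thesis
      using h'1[OF False] False B_H by simp
  qed (simp add: B_H)
  show ?thesis
    unfolding condition_E_def
  proof (intro exI conjI)
    show "orthonormal_basis_of Vp r V" "orthonormal_basis_of (horizontal_space Vp) s h'"
      "span {V 1, V 2} = Pln"
      by (fact V h' plane)+
    show "mean_curv T V r \<noteq> 0 \<longrightarrow> h' 1 = (1 / norm (mean_curv T V r)) *\<^sub>R mean_curv T V r"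
      using h'1 by (simp add: H_def)
    show "\<forall>l\<in>{2..s}. \<forall>i\<in>{3..r}. \<forall>j\<in>{3..r}. Tcoef T V h' l i j = 0"
    proof (intro ballI)
      fix l i j
      assume "l \<in> {2..s}" "i \<in> {3..r}" "j \<in> {3..r}"
      then show "Tcoef T V h' l i j = 0"
        using shape B_perp by (cases "i = j") (auto simp: chen_equality_shape_def Tcoef_def B_def)
    qed
  qed (use shape B_perp in \<open>auto simp: chen_equality_shape_def Tcoef_def B_def inner_add_left\<close>)
qed

lemma chen_defect_gauss:
  fixes V :: "nat \<Rightarrow> 'a::euclidean_space"
  assumes r: "r \<ge> 2" and V_in: "\<And>i. i \<in> {1..r} \<Longrightarrow> V i \<in> Vp"
    and T_sym: "\<And>U W. U \<in> Vp \<Longrightarrow> W \<in> Vp \<Longrightarrow> T U W = T W U"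
    and Gauss: "\<And>F1 F2 F3 F4. F1 \<in> Vp \<Longrightarrow> F2 \<in> Vp \<Longrightarrow> F3 \<in> Vp \<Longrightarrow> F4 \<in> Vp \<Longrightarrow>
        R1 F1 F2 F3 F4 = Rk F1 F2 F3 F4 + inner (T F1 F4) (T F2 F3) - inner (T F2 F4) (T F1 F3)"
  shows "(tau_V Rk V r - K_V Rk V)
           - (tau_V R1 V r - K_V R1 V
              - (real r ^ 2 * (real r - 2)) / (2 * (real r - 1)) * (norm (mean_curv T V r))\<^sup>2)
         = chen_defect (\<lambda>i j. T (V i) (V j)) r"
proof -
  define A where "A i j = T (V i) (V j)" for i j
  define S where "S = (\<Sum>i\<in>{1..r}. A i i)"
  define Q where "Q = (\<Sum>i\<in>{1..r}. \<Sum>j\<in>{1..r}. (norm (A i j))\<^sup>2)"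
  have sectional: "Rk (V i) (V j) (V j) (V i) = R1 (V i) (V j) (V j) (V i) - inner (A i i) (A j j) + (norm (A i j))\<^sup>2"
    if "i \<in> {1..r}" "j \<in> {1..r}" for i j
    using Gauss[OF V_in V_in V_in V_in, OF that(1,2,2,1)] T_sym[OF V_in V_in, OF that]
    by (simp add: A_def power2_norm_eq_inner)
  have "tau_V Rk V r = (1/2) * (\<Sum>i\<in>{1..r}. \<Sum>j\<in>{1..r}.
      R1 (V i) (V j) (V j) (V i) - inner (A i i) (A j j) + (norm (A i j))\<^sup>2)"
    unfolding tau_V_def by (simp only: sectional cong: sum.cong)
  also have "\<dots> = tau_V R1 V r - (1/2) * (\<Sum>i\<in>{1..r}. \<Sum>j\<in>{1..r}. inner (A i i) (A j j)) + (1/2) * Q"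
    unfolding tau_V_def Q_def by (simp add: sum.distrib sum_subtractf algebra_simps)
  also have "(\<Sum>i\<in>{1..r}. \<Sum>j\<in>{1..r}. inner (A i i) (A j j)) = (norm S)\<^sup>2"
    unfolding S_def power2_norm_eq_inner by (simp add: inner_sum_left inner_sum_right) (rule sum.swap)
  finally have tau: "tau_V Rk V r = tau_V R1 V r - (1/2) * (norm S)\<^sup>2 + (1/2) * Q" .
  have K: "K_V Rk V = K_V R1 V - inner (A 1 1) (A 2 2) + (norm (A 1 2))\<^sup>2"
    unfolding K_V_def using r by (intro sectional) auto
  have H: "(norm (mean_curv T V r))\<^sup>2 = (norm S)\<^sup>2 / (real r)\<^sup>2"
    unfolding mean_curv_def S_def A_def using r by (simp add: power_divide)
  have "(real r ^ 2 * (real r - 2)) / (2 * (real r - 1)) * ((norm S)\<^sup>2 / (real r)\<^sup>2)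
      = (1/2) * (norm S)\<^sup>2 - (norm S)\<^sup>2 / (2 * (real r - 1))"
    using r by (simp add: field_simps)
  then show ?thesis
    unfolding H tau K chen_defect_def A_def[symmetric] S_def[symmetric] Q_def[symmetric] by simp
qed

theorem theorem1:
  fixes Vp Pln :: "'a::euclidean_space set"
    and T :: "'a \<Rightarrow> 'a \<Rightarrow> 'a"
    and R1 Rk :: "'a \<Rightarrow> 'a \<Rightarrow> 'a \<Rightarrow> 'a \<Rightarrow> real"
    and V h :: "nat \<Rightarrow> 'a"
    and r s :: nat
  assumes Vp: "subspace Vp"
    and r_def: "r = dim Vp" and r_gt: "r > 2"
    and s_def: "s = dim (horizontal_space Vp)"
    and T_bil: "bilinear T"
    and T_hor: "\<And>U W. U \<in> Vp \<Longrightarrow> W \<in> Vp \<Longrightarrow> T U W \<in> horizontal_space Vp"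
    and T_sym: "\<And>U W. U \<in> Vp \<Longrightarrow> W \<in> Vp \<Longrightarrow> T U W = T W U"
    and R1_curv: "algebraic_curvature_tensor R1"
    and Gauss: "\<And>F1 F2 F3 F4. F1 \<in> Vp \<Longrightarrow> F2 \<in> Vp \<Longrightarrow> F3 \<in> Vp \<Longrightarrow> F4 \<in> Vp \<Longrightarrow>
        R1 F1 F2 F3 F4 = Rk F1 F2 F3 F4 + inner (T F1 F4) (T F2 F3) - inner (T F2 F4) (T F1 F3)"
    and Pln: "subspace Pln" "Pln \<subseteq> Vp" "dim Pln = 2"
    and V: "orthonormal_basis_of Vp r V" "span {V 1, V 2} = Pln"
    and h: "orthonormal_basis_of (horizontal_space Vp) s h"
  shows "tau_V Rk V r - K_V Rk V \<ge>
           tau_V R1 V r - K_V R1 V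
           - (real r ^ 2 * (real r - 2)) / (2 * (real r - 1)) * (norm (mean_curv T V r))\<^sup>2
       \<and> (tau_V Rk V r - K_V Rk V =
           tau_V R1 V r - K_V R1 V
           - (real r ^ 2 * (real r - 2)) / (2 * (real r - 1)) * (norm (mean_curv T V r))\<^sup>2
          \<longleftrightarrow> condition_E Vp r s T Pln)"
proof -
  have r2: "r \<ge> 2"
    using r_gt by simp
  note onV = orthonormal_basis_ofD[OF V(1)]
  have sym: "T (V i) (V j) = T (V j) (V i)" if "i \<in> {1..r}" "j \<in> {1..r}" for i j
    using T_sym onV(2) that by blast
  have "chen_equality_shape (\<lambda>i j. T (V i) (V j)) r \<longleftrightarrow> condition_E Vp r s T Pln"
    using condition_E_imp_chen_equality_shape[where T = T, OF T_bil r2 T_hor T_sym V]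
      chen_equality_shape_imp_condition_E[where T = T, OF r2 T_hor V h] by blast
  then show ?thesis
    using chen_defect_gauss[where T = T and V = V, OF r2 onV(2) T_sym Gauss]
      chen_defect_nonneg_eq_0_iff[where A = "\<lambda>i j. T (V i) (V j)", OF r2 sym]
    by auto
qed

end
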